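(* Let $T \subseteq \mathbb{Z}_2^\omega$ be a thin set. Then there exists a maximal (with respect to inclusion) thin set $T_0 \subseteq \mathbb{Z}_2^\omega$ such that $T \subseteq T_0$. Moreover, for every equivalence class $Q$ of the relation $\sim$ on $\mathbb{Z}_2^\omega$, the set $T_0 \cap Q$ is a maximal thin subset of $Q$.
   Context: $\mathbb{Z}_2^\omega$ is the set of all infinite binary sequences indexed by $\omega=\{0,1,2,\dots\}$. The Hamming distance is $\mathrm{hd}(x,y)=|\{k : x(k)\neq y(k)\}|\in\omega\cup\{\omega\}$, and $x\sim y$ iff $\mathrm{hd}(x,y)$ is finite. A set $T\subseteq \mathbb{Z}_2^\omega$ is thin if for every $n\in\omega$ the restriction to $T$ of the projection $x\mapsto x|_{\omega\setminus\{n\}}$ is injective (equivalently, no two distinct elements of $T$ differ in exactly one coordinate). *)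

theory Defs
  imports Main
begin

text \<open>Elements of Z_2^omega are modelled as functions nat => bool.\<close>

definition hamming_equiv :: "(nat \<Rightarrow> bool) \<Rightarrow> (nat \<Rightarrow> bool) \<Rightarrow> bool" where
  "hamming_equiv x y \<longleftrightarrow> finite {k. x k \<noteq> y k}"

text \<open>Projection x |-> x restricted to omega minus {n}.\<close>
definition proj_away :: "nat \<Rightarrow> (nat \<Rightarrow> bool) \<Rightarrow> (nat \<Rightarrow> bool option)" where
  "proj_away n x = (\<lambda>k. if k = n then None else Some (x k))"

definition thin :: "(nat \<Rightarrow> bool) set \<Rightarrow> bool" where
  "thin T \<longleftrightarrow> (\<forall>n. inj_on (proj_away n) T)"

definition maximal_thin_in :: "(nat \<Rightarrow> bool) set \<Rightarrow> (nat \<Rightarrow> bool) set \<Rightarrow> bool" where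
  "maximal_thin_in S A \<longleftrightarrow> S \<subseteq> A \<and> thin S \<and>
     (\<forall>S'. S \<subseteq> S' \<and> S' \<subseteq> A \<and> thin S' \<longrightarrow> S' = S)"

definition hamming_classes :: "(nat \<Rightarrow> bool) set set" where
  "hamming_classes = {{y. hamming_equiv x y} | x. True}"

end

theory Submission
  imports Defs
begin

text \<open>Both parts come from one observation: two sequences that differ in exactly one coordinate
  are Hamming equivalent. Hence thinness can be checked inside each Hamming class separately,
  and the union of thin sets lying in different classes is thin. A Zorn argument produces a
  maximal thin superset \<open>T0\<close> of \<open>T\<close>; if \<open>T0 \<inter> Q\<close> could be enlarged inside a class \<open>Q\<close> to a thin
  \<open>S\<close>, then \<open>(T0 - Q) \<union> S\<close> would be a thin proper superset of \<open>T0\<close>.\<close>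

lemma thin_iff:
  "thin S \<longleftrightarrow> (\<forall>x\<in>S. \<forall>y\<in>S. \<forall>n. (\<forall>k. k \<noteq> n \<longrightarrow> x k = y k) \<longrightarrow> x = y)"
proof -
  have agree: "proj_away n x = proj_away n y \<longleftrightarrow> (\<forall>k. k \<noteq> n \<longrightarrow> x k = y k)" for n x y
    unfolding proj_away_def by (auto simp: fun_eq_iff)
  show ?thesis
    unfolding thin_def inj_on_def agree by blast
qed

lemma thinD: "thin S \<Longrightarrow> x \<in> S \<Longrightarrow> y \<in> S \<Longrightarrow> \<forall>k. k \<noteq> n \<longrightarrow> x k = y k \<Longrightarrow> x = y"
  unfolding thin_iff by blast

lemma thin_subset: "thin B \<Longrightarrow> A \<subseteq> B \<Longrightarrow> thin A"
  unfolding thin_def using inj_on_subset by blast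

lemma thin_Union_chain:
  assumes "\<And>S. S \<in> C \<Longrightarrow> thin S" and "\<And>X Y. X \<in> C \<Longrightarrow> Y \<in> C \<Longrightarrow> X \<subseteq> Y \<or> Y \<subseteq> X"
  shows "thin (\<Union>C)"
  unfolding thin_iff
proof (intro ballI allI impI)
  fix x y n
  assume "x \<in> \<Union>C" "y \<in> \<Union>C" and agree: "\<forall>k. k \<noteq> n \<longrightarrow> x k = y k"
  then obtain Z where "Z \<in> C" "x \<in> Z" "y \<in> Z"
    using assms(2) by blast
  then show "x = y"
    using assms(1) agree thinD by metis
qed

lemma hamming_equiv_sym: "hamming_equiv x y \<Longrightarrow> hamming_equiv y x"
  unfolding hamming_equiv_def by (simp add: eq_commute)

lemma hamming_equiv_trans:
  assumes "hamming_equiv x y" "hamming_equiv y z"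
  shows "hamming_equiv x z"
proof -
  have "{k. x k \<noteq> z k} \<subseteq> {k. x k \<noteq> y k} \<union> {k. y k \<noteq> z k}"
    by auto
  with assms show ?thesis
    unfolding hamming_equiv_def by (meson finite_Un finite_subset)
qed

lemma hamming_equiv_if_agree_off:
  assumes "\<forall>k. k \<noteq> n \<longrightarrow> x k = y k"
  shows "hamming_equiv x y"
proof -
  have "{k. x k \<noteq> y k} \<subseteq> {n}"
    using assms by auto
  then show ?thesis
    unfolding hamming_equiv_def using finite_subset by blast
qed

lemma not_hamming_equiv_across_class:
  assumes "Q \<in> hamming_classes" "x \<in> Q" "y \<notin> Q"
  shows "\<not> hamming_equiv x y"
proof
  assume "hamming_equiv x y"
  obtain z where "Q = {y. hamming_equiv z y}"
    using assms(1) unfolding hamming_classes_def by blast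
  with assms(2,3) \<open>hamming_equiv x y\<close> show False
    using hamming_equiv_trans by blast
qed

lemma thin_Un_inequivalent:
  assumes "thin A" "thin B" and "\<And>a b. a \<in> A \<Longrightarrow> b \<in> B \<Longrightarrow> \<not> hamming_equiv a b"
  shows "thin (A \<union> B)"
  unfolding thin_iff
proof (intro ballI allI impI)
  fix x y n
  assume "x \<in> A \<union> B" "y \<in> A \<union> B" and agree: "\<forall>k. k \<noteq> n \<longrightarrow> x k = y k"
  have "hamming_equiv x y" "hamming_equiv y x"
    using agree hamming_equiv_if_agree_off hamming_equiv_sym by blast+
  then have "x \<in> A \<and> y \<in> A \<or> x \<in> B \<and> y \<in> B"
    using \<open>x \<in> A \<union> B\<close> \<open>y \<in> A \<union> B\<close> assms(3) by blast
  then show "x = y"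
    using assms(1,2) agree thinD by metis
qed

lemma thin_extends_to_maximal:
  assumes "thin T"
  shows "\<exists>M. T \<subseteq> M \<and> maximal_thin_in M UNIV"
proof -
  let ?A = "{S. T \<subseteq> S \<and> thin S}"
  have "\<exists>M\<in>?A. \<forall>X\<in>?A. M \<subseteq> X \<longrightarrow> X = M"
  proof (rule subset_Zorn_nonempty)
    show "?A \<noteq> {}"
      using assms by blast
  next
    fix C
    assume "C \<noteq> {}" and chain: "subset.chain ?A C"
    then have "T \<subseteq> \<Union>C"
      by (force simp: subset_chain_def)
    moreover have "thin (\<Union>C)"
      using chain by - (rule thin_Union_chain; auto simp: subset_chain_def)
    ultimately show "\<Union>C \<in> ?A"
      by simp
  qed
  then obtain M where "T \<subseteq> M" "thin M" and max: "\<And>X. M \<subseteq> X \<Longrightarrow> T \<subseteq> X \<Longrightarrow> thin X \<Longrightarrow> X = M"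
    by auto
  have "maximal_thin_in M UNIV"
    unfolding maximal_thin_in_def using \<open>T \<subseteq> M\<close> \<open>thin M\<close> max by (meson subset_trans subset_UNIV)
  with \<open>T \<subseteq> M\<close> show ?thesis
    by blast
qed

lemma maximal_thin_in_class:
  assumes M: "maximal_thin_in M UNIV" and Q: "Q \<in> hamming_classes"
  shows "maximal_thin_in (M \<inter> Q) Q"
proof -
  have "thin M" and M_max: "\<And>X. M \<subseteq> X \<Longrightarrow> thin X \<Longrightarrow> X = M"
    using M unfolding maximal_thin_in_def by auto
  have "S = M \<inter> Q" if S: "M \<inter> Q \<subseteq> S" "S \<subseteq> Q" "thin S" for S
  proof -
    have "\<not> hamming_equiv a b" if "a \<in> M - Q" "b \<in> S" for a b
    proof -
      have "\<not> hamming_equiv b a"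
        using that S(2) by (intro not_hamming_equiv_across_class[OF Q]) auto
      then show ?thesis
        using hamming_equiv_sym by blast
    qed
    then have "thin ((M - Q) \<union> S)"
      by (intro thin_Un_inequivalent thin_subset[OF \<open>thin M\<close>] S(3)) auto
    moreover have "M \<subseteq> (M - Q) \<union> S"
      using S(1) by blast
    ultimately have "(M - Q) \<union> S = M"
      using M_max by blast
    then show "S = M \<inter> Q"
      using S(1,2) by blast
  qed
  moreover have "thin (M \<inter> Q)"
    by (rule thin_subset[OF \<open>thin M\<close>]) blast
  ultimately show ?thesis
    unfolding maximal_thin_in_def by blast
qed

theorem proposition3:
  fixes T :: "(nat \<Rightarrow> bool) set"
  assumes "thin T"
  shows "\<exists>T0. maximal_thin_in T0 UNIV \<and> T \<subseteq> T0 \<and>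
           (\<forall>Q \<in> hamming_classes. maximal_thin_in (T0 \<inter> Q) Q)"
  using thin_extends_to_maximal[OF assms] maximal_thin_in_class by blast

end
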